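(* Let $K\subseteq\mathbb{R}^n$ be a proper cone and let $A\in\mathbb{R}^{n\times n}$ be $K$-monotone. Let $A=U-V$ be a $K$-regular splitting and let $U=F-G$ be a $K$-weak regular splitting of type II such that $VF^{-1}G=GF^{-1}V$. Fix a positive integer $s$, let $P_s$ be the matrix with $P_s^{-1}=\sum_{j=0}^{s-1}(F^{-1}G)^{j}F^{-1}$, and let $\widehat{T}_{s}=(GF^{-1})^{s}+\sum_{j=0}^{s-1}(GF^{-1})^{j}VF^{-1}$. If $G\geq_K GF^{-1}G$, then the induced splitting $A=P_s-\widehat{T}_sP_s$ is a $K$-regular splitting.
   Context: A proper cone $K\subseteq\mathbb{R}^n$ is a closed, convex, pointed, solid cone. For $M\in\mathbb{R}^{n\times n}$, $M\geq_K 0$ means $MK\subseteq K$, and $M\geq_K N$ means $M-N\geq_K0$. A matrix $A$ is $K$-monotone if $A$ is nonsingular and $A^{-1}\geq_K 0$. A splitting $A=U-V$ (with $U$ nonsingular) is $K$-regular if $U^{-1}\geq_K 0$ and $V\geq_K 0$; it is a $K$-weak regular splitting of type II if $U^{-1}\geq_K 0$ and $VU^{-1}\geq_K 0$. *)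

theory Defs
  imports "HOL-Analysis.Analysis"
begin

definition proper_cone :: "(real^'n) set \<Rightarrow> bool" where
  "proper_cone K \<longleftrightarrow> cone K \<and> closed K \<and> convex K
     \<and> K \<inter> uminus ` K = {0} \<and> interior K \<noteq> {}"

definition K_nonneg :: "(real^'n) set \<Rightarrow> real^'n^'n \<Rightarrow> bool" where
  "K_nonneg K M \<longleftrightarrow> (\<forall>x\<in>K. M *v x \<in> K)"

definition K_monotone :: "(real^'n) set \<Rightarrow> real^'n^'n \<Rightarrow> bool" where
  "K_monotone K A \<longleftrightarrow> invertible A \<and> K_nonneg K (matrix_inv A)"

definition K_regular_splitting ::
  "(real^'n) set \<Rightarrow> real^'n^'n \<Rightarrow> real^'n^'n \<Rightarrow> real^'n^'n \<Rightarrow> bool" where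
  "K_regular_splitting K A U V \<longleftrightarrow> A = U - V \<and> invertible U
     \<and> K_nonneg K (matrix_inv U) \<and> K_nonneg K V"

definition K_weak_regular_splitting_II ::
  "(real^'n) set \<Rightarrow> real^'n^'n \<Rightarrow> real^'n^'n \<Rightarrow> real^'n^'n \<Rightarrow> bool" where
  "K_weak_regular_splitting_II K A U V \<longleftrightarrow> A = U - V \<and> invertible U
     \<and> K_nonneg K (matrix_inv U) \<and> K_nonneg K (V ** matrix_inv U)"

fun matpow :: "real^'n^'n \<Rightarrow> nat \<Rightarrow> real^'n^'n" where
  "matpow M 0 = mat 1"
| "matpow M (Suc k) = M ** matpow M k"

end

theory Submission
  imports Defs
begin

text \<open>Write Q = G F^-1 and R = Q^s. Since U F^-1 = I - Q, the sum defining P_s^-1 telescopes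
to U^-1 (I - R). For y in K the partial sums F^-1 (I + Q + ... + Q^(m-1)) y = U^-1 (I - Q^m) y
stay K-below U^-1 y; a pointed closed cone carries a linear functional dominating the norm, so
the series of the Q^j y, and with it the Neumann series of R, converges absolutely on K. As K is
solid, I - R is then invertible with K-nonnegative inverse N, and P_s = N U. Finally V F^-1
commutes with Q, which gives T_s P_s = N Q^(s-1) (G - G F^-1 G) + V and
P_s - T_s P_s = N (I - R) U - V = A.\<close>

lemma matrix_add_rdistrib: "((A::'a::semiring_1^'n^'m) + B) ** C = A ** C + B ** C"
  by (vector matrix_matrix_mult_def sum.distrib[symmetric] field_simps)

lemma matrix_diff_ldistrib: "(A::'a::ring_1^'n^'m) ** (B - C) = A ** B - A ** C"
  by (vector matrix_matrix_mult_def sum_subtractf[symmetric] field_simps)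

lemma matrix_diff_rdistrib: "((A::'a::ring_1^'n^'m) - B) ** C = A ** C - B ** C"
  by (vector matrix_matrix_mult_def sum_subtractf[symmetric] field_simps)

lemma matrix_sum_ldistrib: "(A::'a::semiring_1^'n^'m) ** sum f S = (\<Sum>i\<in>S. A ** f i)"
  by (induction S rule: infinite_finite_induct) (auto simp: matrix_add_ldistrib)

lemma matrix_vector_mult_sum_rdistrib: "sum f S *v (x::'a::semiring_1^'n) = (\<Sum>i\<in>S. f i *v x)"
  by (induction S rule: infinite_finite_induct) (auto simp: matrix_vector_mult_add_rdistrib)

lemma invertible_matrix_inv_mult:
  fixes A :: "'a::semiring_1^'n^'m"
  assumes "invertible A"
  shows matrix_inv_right: "A ** matrix_inv A = mat 1"
    and matrix_inv_left: "matrix_inv A ** A = mat 1"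
proof -
  have "\<exists>A'. A ** A' = mat 1 \<and> A' ** A = mat 1"
    using assms unfolding invertible_def by blast
  then have "A ** matrix_inv A = mat 1 \<and> matrix_inv A ** A = mat 1"
    unfolding matrix_inv_def by (rule someI_ex)
  then show "A ** matrix_inv A = mat 1" "matrix_inv A ** A = mat 1" by auto
qed

lemma matrix_inv_unique:
  fixes A :: "'a::field^'n^'n"
  assumes "A ** B = mat 1"
  shows "matrix_inv A = B"
proof -
  have "invertible A" using assms invertible_right_inverse by blast
  then have "matrix_inv A = matrix_inv A ** (A ** B)" by (simp add: assms)
  also have "\<dots> = B" by (simp add: matrix_mul_assoc matrix_inv_left \<open>invertible A\<close>)
  finally show ?thesis .
qed

lemma invertible_matrix_inv:
  assumes "invertible A"
  shows "invertible (matrix_inv A)"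
  unfolding invertible_def using matrix_inv_right[OF assms] matrix_inv_left[OF assms] by blast

lemma matrix_inv_matrix_inv: "invertible (A::'a::field^'n^'n) \<Longrightarrow> matrix_inv (matrix_inv A) = A"
  by (rule matrix_inv_unique) (rule matrix_inv_left)

lemma matrix_inv_mult:
  fixes A B :: "'a::field^'n^'n"
  assumes "invertible A" "invertible B"
  shows "matrix_inv (A ** B) = matrix_inv B ** matrix_inv A"
proof (rule matrix_inv_unique)
  have "A ** B ** (matrix_inv B ** matrix_inv A) = A ** (B ** matrix_inv B) ** matrix_inv A"
    by (simp add: matrix_mul_assoc)
  then show "A ** B ** (matrix_inv B ** matrix_inv A) = mat 1"
    by (simp add: matrix_inv_right assms)
qed

lemma matrix_inv_commute:
  fixes M X :: "'a::semiring_1^'n^'n"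
  assumes "invertible M" "M ** X = X ** M"
  shows "matrix_inv M ** X = X ** matrix_inv M"
proof -
  have "matrix_inv M ** X = matrix_inv M ** (X ** M) ** matrix_inv M"
    by (simp flip: matrix_mul_assoc add: matrix_inv_right assms(1))
  also have "\<dots> = (matrix_inv M ** M) ** X ** matrix_inv M"
    by (metis assms(2) matrix_mul_assoc)
  also have "\<dots> = X ** matrix_inv M"
    by (simp add: matrix_inv_left assms(1))
  finally show ?thesis .
qed

lemma matpow_add: "matpow M (m + n) = matpow M m ** matpow M n"
  by (induction m) (auto simp: matrix_mul_assoc)

lemma matpow_mult: "matpow (matpow M m) n = matpow M (m * n)"
  by (induction n) (auto simp flip: matpow_add)

lemma matpow_commute: "M ** X = X ** M \<Longrightarrow> matpow M n ** X = X ** matpow M n"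
  by (induction n) (auto simp: matrix_mul_assoc, metis matrix_mul_assoc)

lemma matpow_Suc_right: "matpow M (Suc n) = matpow M n ** M"
  using matpow_commute[of M M n] by simp

lemma matpow_shift: "X ** matpow (Y ** X) n = matpow (X ** Y) n ** X"
  by (induction n) (simp_all, metis matrix_mul_assoc)

lemma geometric_sum_matpow: "(mat 1 - Q) ** (\<Sum>j<m. matpow Q j) = mat 1 - matpow Q m"
  by (induction m) (auto simp: matrix_add_ldistrib matrix_diff_rdistrib)

lemma invertible_mat_1_minus_if_matpow:
  assumes "invertible (mat 1 - matpow Q s)"
  shows "invertible (mat 1 - Q)"
    and "matrix_inv (mat 1 - Q) = (\<Sum>j<s. matpow Q j) ** matrix_inv (mat 1 - matpow Q s)"
proof -
  have "(mat 1 - Q) ** ((\<Sum>j<s. matpow Q j) ** matrix_inv (mat 1 - matpow Q s)) = mat 1"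
    by (simp add: matrix_mul_assoc geometric_sum_matpow matrix_inv_right assms)
  then show "invertible (mat 1 - Q)"
    and "matrix_inv (mat 1 - Q) = (\<Sum>j<s. matpow Q j) ** matrix_inv (mat 1 - matpow Q s)"
    using invertible_right_inverse matrix_inv_unique by blast+
qed

lemma proper_coneD:
  assumes "proper_cone K"
  shows "closed K" "convex_cone K" "K \<inter> uminus ` K = {0}" "interior K \<noteq> {}"
proof -
  show "closed K" "K \<inter> uminus ` K = {0}" "interior K \<noteq> {}"
    using assms unfolding proper_cone_def by simp_all
  then have "0 \<in> K" by blast
  moreover have "convex K" "cone K" using assms unfolding proper_cone_def by simp_all
  ultimately show "convex_cone K" unfolding convex_cone_iff using convex_cone by blast
qed

lemma convex_cone_sum: "convex_cone K \<Longrightarrow> (\<And>i. i \<in> S \<Longrightarrow> f i \<in> K) \<Longrightarrow> sum f S \<in> K"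
  by (induction S rule: infinite_finite_induct)
    (auto simp: convex_cone_contains_0 convex_cone_add)

lemma pointed_cone_add_eq_0:
  fixes K :: "'a::ab_group_add set"
  assumes "K \<inter> uminus ` K = {0}" "x \<in> K" "y \<in> K" "x + y = 0"
  shows "x = 0"
proof -
  have "x = - y" using assms(4) by (simp add: add_eq_0_iff2)
  then have "x \<in> uminus ` K" using assms(3) by blast
  then show ?thesis using assms(1,2) by auto
qed

lemma K_nonneg_mat_1: "K_nonneg K (mat 1)"
  unfolding K_nonneg_def by simp

lemma K_nonneg_mult: "K_nonneg K A \<Longrightarrow> K_nonneg K B \<Longrightarrow> K_nonneg K (A ** B)"
  unfolding K_nonneg_def by (simp flip: matrix_vector_mul_assoc)

lemma K_nonneg_matpow: "K_nonneg K M \<Longrightarrow> K_nonneg K (matpow M n)"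
  by (induction n) (auto simp: K_nonneg_mat_1 K_nonneg_mult)

lemma K_nonneg_add: "convex_cone K \<Longrightarrow> K_nonneg K A \<Longrightarrow> K_nonneg K B \<Longrightarrow> K_nonneg K (A + B)"
  unfolding K_nonneg_def by (simp add: matrix_vector_mult_add_rdistrib convex_cone_add)

lemma K_nonneg_sum:
  "convex_cone K \<Longrightarrow> (\<And>i. i \<in> S \<Longrightarrow> K_nonneg K (f i)) \<Longrightarrow> K_nonneg K (sum f S)"
  unfolding K_nonneg_def by (simp add: matrix_vector_mult_sum_rdistrib convex_cone_sum)

lemma pointed_cone_norm_le_inner:
  fixes K :: "'a::euclidean_space set"
  assumes "closed K" "convex_cone K" "K \<inter> uminus ` K = {0}"
  obtains a where "\<And>x. x \<in> K \<Longrightarrow> norm x \<le> a \<bullet> x"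
proof -
  define C where "C = convex hull (K \<inter> sphere 0 1)"
  have "compact C"
    unfolding C_def by (intro compact_convex_hull closed_Int_compact assms(1) compact_sphere)
  have "0 \<notin> C"
  proof
    assume "0 \<in> C"
    then obtain S u where S: "finite S" "S \<subseteq> K \<inter> sphere 0 1" "\<forall>v\<in>S. 0 \<le> u v"
      "sum u S = 1" "(\<Sum>v\<in>S. u v *\<^sub>R v) = 0"
      unfolding C_def convex_hull_explicit by auto
    have "\<exists>v\<in>S. 0 < u v"
    proof (rule ccontr)
      assume "\<not> (\<exists>v\<in>S. 0 < u v)"
      then have "sum u S \<le> 0" by (intro sum_nonpos) (auto simp: not_less)
      then show False using S(4) by simp
    qed
    then obtain v where v: "v \<in> S" "0 < u v" by blast
    have "u v *\<^sub>R v \<in> K"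
      using S(2) v by (auto intro: convex_cone_scaleR[OF assms(2)])
    moreover have "(\<Sum>w\<in>S - {v}. u w *\<^sub>R w) \<in> K"
      using S(2,3) by (intro convex_cone_sum assms(2)) (auto intro: convex_cone_scaleR[OF assms(2)])
    moreover have "u v *\<^sub>R v + (\<Sum>w\<in>S - {v}. u w *\<^sub>R w) = 0"
      using S(1,5) v(1) by (simp add: sum.remove)
    ultimately have "u v *\<^sub>R v = 0" by (rule pointed_cone_add_eq_0[OF assms(3)])
    then show False using v S(2) by auto
  qed
  moreover have "convex C" unfolding C_def by simp
  ultimately obtain a b where "0 < b" and ab: "\<And>x. x \<in> C \<Longrightarrow> b < a \<bullet> x"
    using separating_hyperplane_closed_0 compact_imp_closed[OF \<open>compact C\<close>] by metis
  have "norm x \<le> (a /\<^sub>R b) \<bullet> x" if "x \<in> K" for x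
  proof (cases "x = 0")
    case False
    have "x /\<^sub>R norm x \<in> C"
      unfolding C_def using that False
      by (intro hull_inc) (auto intro: convex_cone_scaleR[OF assms(2)])
    then have "b < a \<bullet> (x /\<^sub>R norm x)" by (rule ab)
    then have "b < inverse (norm x) * (a \<bullet> x)" by (simp add: inner_scaleR_right)
    then have "b * norm x < a \<bullet> x" using False by (simp add: field_simps)
    then show ?thesis using \<open>0 < b\<close> by (simp add: field_simps)
  qed simp
  then show thesis using that by blast
qed

lemma summable_norm_if_cone_bounded_partial_sums:
  fixes x :: "nat \<Rightarrow> 'a::euclidean_space"
  assumes "closed K" "convex_cone K" "K \<inter> uminus ` K = {0}"
    and x: "\<And>j. x j \<in> K" and bounded: "\<And>m. b - (\<Sum>j<m. x j) \<in> K"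
  shows "summable (\<lambda>j. norm (x j))"
proof -
  obtain a where a: "\<And>y. y \<in> K \<Longrightarrow> norm y \<le> a \<bullet> y"
    using pointed_cone_norm_le_inner[OF assms(1-3)] by blast
  have partial: "(\<Sum>j<m. norm (x j)) \<le> a \<bullet> b" for m
  proof -
    have "(\<Sum>j<m. norm (x j)) \<le> (\<Sum>j<m. a \<bullet> x j)" by (intro sum_mono a x)
    also have "\<dots> = a \<bullet> b - a \<bullet> (b - (\<Sum>j<m. x j))"
      by (simp add: inner_sum_right inner_diff_right)
    also have "\<dots> \<le> a \<bullet> b"
      using a[OF bounded[of m]] norm_ge_zero[of "b - (\<Sum>j<m. x j)"] by linarith
    finally show ?thesis .
  qed
  show ?thesis
  proof (rule bounded_imp_summable)
    show "(\<Sum>j\<le>n. norm (x j)) \<le> a \<bullet> b" for n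
      using partial[of "Suc n"] by (simp add: lessThan_Suc_atMost)
  qed simp
qed

lemma linear_surj_if_range_has_interior:
  fixes f :: "'a::real_vector \<Rightarrow> 'b::euclidean_space"
  assumes "linear f" "interior K \<noteq> {}" "K \<subseteq> range f"
  shows "surj f"
proof -
  have "UNIV = affine hull K" using affine_hull_nonempty_interior[OF assms(2)] by simp
  also have "\<dots> \<subseteq> span K" by (rule affine_hull_subset_span)
  also have "\<dots> \<subseteq> range f"
    by (intro span_minimal assms(3) linear_subspace_image assms(1) subspace_UNIV)
  finally show ?thesis by auto
qed

lemma matpow_sums_solves:
  fixes R :: "real^'n^'n"
  assumes "(\<lambda>k. matpow R k *v y) sums z"
  shows "(mat 1 - R) *v z = y"
proof -
  let ?f = "\<lambda>k. matpow R k *v y"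
  have "(\<lambda>k. ?f k - ?f (Suc k)) sums (?f 0 - 0)"
    by (rule telescope_sums') (rule summable_LIMSEQ_zero[OF sums_summable[OF assms]])
  moreover have "(\<lambda>k. ?f k - ?f (Suc k)) = (\<lambda>k. (mat 1 - R) *v ?f k)"
    by (simp add: matrix_diff_rdistrib matrix_vector_mult_diff_rdistrib matrix_vector_mul_assoc)
  moreover have "(\<lambda>k. (mat 1 - R) *v ?f k) sums ((mat 1 - R) *v z)"
    by (rule bounded_linear.sums[OF matrix_vector_mul_bounded_linear assms])
  ultimately show ?thesis by (simp add: sums_unique2)
qed

lemma Neumann_K_nonneg_inverse:
  fixes R :: "real^'n^'n"
  assumes "closed K" "convex_cone K" "interior K \<noteq> {}" "K_nonneg K R"
    and summable: "\<And>y. y \<in> K \<Longrightarrow> summable (\<lambda>k. matpow R k *v y)"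
  shows "invertible (mat 1 - R)" "K_nonneg K (matrix_inv (mat 1 - R))"
proof -
  have preimage: "\<exists>z\<in>K. (mat 1 - R) *v z = y" if "y \<in> K" for y
  proof -
    let ?f = "\<lambda>k. matpow R k *v y"
    have sums: "?f sums suminf ?f" using summable[OF that] by (rule summable_sums)
    have partial_sums: "(\<Sum>k<n. ?f k) \<in> K" for n
      using K_nonneg_matpow[OF assms(4)] that
      by (intro convex_cone_sum[OF assms(2)]) (auto simp: K_nonneg_def)
    have "suminf ?f \<in> K"
      by (rule closed_sequentially[OF assms(1) partial_sums sums[unfolded sums_def]])
    then show ?thesis using matpow_sums_solves[OF sums] by blast
  qed
  then have "surj ((*v) (mat 1 - R))"
    by (intro linear_surj_if_range_has_interior[OF _ assms(3)]) auto
  then show inv: "invertible (mat 1 - R)"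
    using matrix_right_invertible_surjective invertible_right_inverse by blast
  show "K_nonneg K (matrix_inv (mat 1 - R))"
    unfolding K_nonneg_def
  proof
    fix y assume "y \<in> K"
    then obtain z where "z \<in> K" "(mat 1 - R) *v z = y" using preimage by blast
    then have "matrix_inv (mat 1 - R) *v y = z"
      by (auto simp: matrix_vector_mul_assoc matrix_inv_left inv)
    then show "matrix_inv (mat 1 - R) *v y \<in> K" using \<open>z \<in> K\<close> by simp
  qed
qed

lemma splitting_inverse_geometric_sum:
  fixes U F G :: "real^'n^'n"
  assumes "U = F - G" "invertible U" "invertible F"
  shows "matrix_inv F ** (\<Sum>j<m. matpow (G ** matrix_inv F) j)
    = matrix_inv U ** (mat 1 - matpow (G ** matrix_inv F) m)"
proof -
  define Q where "Q = G ** matrix_inv F"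
  have "U ** matrix_inv F = mat 1 - Q"
    unfolding assms(1) Q_def by (simp add: matrix_diff_rdistrib matrix_inv_right assms(3))
  then have Fi: "matrix_inv F = matrix_inv U ** (mat 1 - Q)"
    by (metis matrix_inv_left assms(2) matrix_mul_assoc matrix_mul_lid)
  have "matrix_inv F ** (\<Sum>j<m. matpow Q j) = matrix_inv U ** ((mat 1 - Q) ** (\<Sum>j<m. matpow Q j))"
    by (simp only: Fi matrix_mul_assoc)
  then show ?thesis by (simp add: geometric_sum_matpow Q_def)
qed

lemma iteration_sum_inverse:
  fixes U F G :: "real^'n^'n" and s :: nat
  defines "S \<equiv> \<Sum>j<s. matpow (matrix_inv F ** G) j ** matrix_inv F"
  assumes "U = F - G" "invertible U" "invertible F"
    and R: "invertible (mat 1 - matpow (G ** matrix_inv F) s)"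
  shows "invertible S" "matrix_inv S = matrix_inv (mat 1 - matpow (G ** matrix_inv F) s) ** U"
proof -
  have "S = matrix_inv F ** (\<Sum>j<s. matpow (G ** matrix_inv F) j)"
    by (simp add: S_def matrix_sum_ldistrib matpow_shift)
  then have "S = matrix_inv U ** (mat 1 - matpow (G ** matrix_inv F) s)"
    using splitting_inverse_geometric_sum[OF assms(2-4)] by simp
  then show "invertible S" "matrix_inv S = matrix_inv (mat 1 - matpow (G ** matrix_inv F) s) ** U"
    using R assms(3)
    by (simp_all add: matrix_inv_mult matrix_inv_matrix_inv invertible_matrix_inv invertible_mult)
qed

lemma weak_regular_II_iteration_summable:
  fixes U F G :: "real^'n^'n"
  assumes "proper_cone K" "K_monotone K U" "K_weak_regular_splitting_II K U F G" "y \<in> K"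
  shows "summable (\<lambda>j. norm (matpow (G ** matrix_inv F) j *v y))"
proof -
  define Q where "Q = G ** matrix_inv F"
  have U: "invertible U" "K_nonneg K (matrix_inv U)"
    and F: "U = F - G" "invertible F" "K_nonneg K (matrix_inv F)" and Q: "K_nonneg K Q"
    using assms(2,3) unfolding K_monotone_def K_weak_regular_splitting_II_def Q_def by auto
  note K = proper_coneD(1-3)[OF assms(1)]
  let ?x = "\<lambda>j. matrix_inv F *v (matpow Q j *v y)"
  have "?x j \<in> K" for j
    using F(3) K_nonneg_matpow[OF Q] assms(4) unfolding K_nonneg_def by blast
  moreover have "matrix_inv U *v y - (\<Sum>j<m. ?x j) \<in> K" for m
  proof -
    have "(\<Sum>j<m. ?x j) = (matrix_inv F ** (\<Sum>j<m. matpow Q j)) *v y"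
      by (simp add: matrix_sum_ldistrib matrix_vector_mult_sum_rdistrib matrix_vector_mul_assoc)
    also have "\<dots> = matrix_inv U *v y - (matrix_inv U ** matpow Q m) *v y"
      using splitting_inverse_geometric_sum[OF F(1) U(1) F(2)]
      by (simp add: Q_def matrix_diff_ldistrib matrix_vector_mult_diff_rdistrib)
    finally show ?thesis
      using K_nonneg_mult[OF U(2) K_nonneg_matpow[OF Q]] assms(4) by (simp add: K_nonneg_def)
  qed
  ultimately have summable: "summable (\<lambda>j. norm (?x j))"
    by (rule summable_norm_if_cone_bounded_partial_sums[OF K])
  obtain C where C: "\<And>x. norm (F *v x) \<le> norm x * C"
    using bounded_linear.bounded[OF matrix_vector_mul_bounded_linear] by blast
  have bound: "norm (matpow Q j *v y) \<le> norm (?x j) * C" for j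
  proof -
    have "F *v ?x j = matpow Q j *v y"
      by (simp add: matrix_vector_mul_assoc matrix_mul_assoc matrix_inv_right F(2))
    then show ?thesis using C[of "?x j"] by simp
  qed
  show ?thesis
    unfolding Q_def[symmetric]
    by (rule summable_comparison_test'[OF summable_mult2[OF summable, of C]]) (simp add: bound)
qed

lemma weak_regular_II_mat_1_minus_matpow_inverse:
  fixes U F G :: "real^'n^'n"
  assumes "proper_cone K" "K_monotone K U" "K_weak_regular_splitting_II K U F G" "s \<ge> 1"
  shows "invertible (mat 1 - matpow (G ** matrix_inv F) s)"
    and "K_nonneg K (matrix_inv (mat 1 - matpow (G ** matrix_inv F) s))"
proof -
  define Q where "Q = G ** matrix_inv F"
  note K = proper_coneD(1,2,4)[OF assms(1)]
  have Q: "K_nonneg K Q"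
    using assms(3) unfolding K_weak_regular_splitting_II_def Q_def by auto
  have "summable (\<lambda>k. matpow (matpow Q s) k *v y)" if "y \<in> K" for y
  proof -
    have "summable ((\<lambda>j. norm (matpow Q j *v y)) \<circ> (\<lambda>k. s * k))"
      using weak_regular_II_iteration_summable[OF assms(1-3) that] assms(4)
      by (intro summable_reindex) (auto simp: inj_on_def Q_def)
    then have "summable (\<lambda>k. norm (matpow (matpow Q s) k *v y))"
      by (simp add: o_def matpow_mult)
    then show ?thesis by (rule summable_norm_cancel)
  qed
  then show "invertible (mat 1 - matpow Q s)" "K_nonneg K (matrix_inv (mat 1 - matpow Q s))"
    using Neumann_K_nonneg_inverse[OF K K_nonneg_matpow[OF Q]] by blast+
qed

lemma matpow_iteration_mult_splitting:
  fixes F G :: "real^'n^'n"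
  assumes "invertible F" "s \<ge> 1"
  shows "matpow (G ** matrix_inv F) s ** (F - G)
    = matpow (G ** matrix_inv F) (s - 1) ** (G - G ** matrix_inv F ** G)"
proof -
  define Q where "Q = G ** matrix_inv F"
  have "Q ** (F - G) = G - G ** matrix_inv F ** G"
    unfolding Q_def by (simp add: matrix_diff_ldistrib matrix_inv_left assms(1) flip: matrix_mul_assoc)
  moreover have "matpow Q s = matpow Q (s - 1) ** Q"
    using matpow_Suc_right[of Q "s - 1"] assms(2) by simp
  ultimately show ?thesis by (simp flip: Q_def matrix_mul_assoc)
qed

lemma induced_iteration_matrix:
  fixes U V F G :: "real^'n^'n" and s :: nat
  defines "Q \<equiv> G ** matrix_inv F"
  defines "N \<equiv> matrix_inv (mat 1 - matpow Q s)"
  defines "T \<equiv> matpow Q s + (\<Sum>j<s. matpow Q j ** V ** matrix_inv F)"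
  assumes U: "U = F - G" and F: "invertible F" and R: "invertible (mat 1 - matpow Q s)"
    and commute: "V ** matrix_inv F ** G = G ** matrix_inv F ** V"
  shows "T ** (N ** U) = N ** (matpow Q s ** U) + V"
    and "N ** U - T ** (N ** U) = U - V"
proof -
  let ?R = "matpow Q s" and ?W = "\<Sum>j<s. matpow Q j" and ?VFi = "V ** matrix_inv F"
  have "Q ** ?VFi = ?VFi ** Q"
    unfolding Q_def by (metis commute matrix_mul_assoc)
  then have "matpow Q j ** V ** matrix_inv F = ?VFi ** matpow Q j" for j
    using matpow_commute by (metis matrix_mul_assoc)
  then have VW: "(\<Sum>j<s. matpow Q j ** V ** matrix_inv F) = ?VFi ** ?W"
    by (simp add: matrix_sum_ldistrib)
  have "(mat 1 - ?R) ** ?R = ?R ** (mat 1 - ?R)"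
    by (simp add: matrix_diff_ldistrib matrix_diff_rdistrib)
  then have RN: "?R ** N = N ** ?R"
    unfolding N_def by (metis matrix_inv_commute R)
  have "U = (mat 1 - Q) ** F"
    unfolding U Q_def by (simp add: matrix_diff_rdistrib matrix_inv_left F flip: matrix_mul_assoc)
  then have "?W ** N ** U = matrix_inv (mat 1 - Q) ** ((mat 1 - Q) ** F)"
    by (simp add: N_def invertible_mat_1_minus_if_matpow(2)[OF R])
  also have "\<dots> = F"
    by (simp add: matrix_mul_assoc matrix_inv_left invertible_mat_1_minus_if_matpow(1)[OF R])
  finally have WNU: "?W ** N ** U = F" .
  have "(?R + ?VFi ** ?W) ** (N ** U) = ?R ** N ** U + ?VFi ** (?W ** N ** U)"
    by (simp add: matrix_add_rdistrib matrix_mul_assoc)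
  also have "\<dots> = N ** (?R ** U) + ?VFi ** F"
    by (simp only: WNU) (metis RN matrix_mul_assoc)
  also have "?VFi ** F = V"
    by (simp add: matrix_inv_left F flip: matrix_mul_assoc)
  finally show T: "T ** (N ** U) = N ** (?R ** U) + V" by (simp add: T_def VW)
  have "N ** U - N ** (?R ** U) = (N ** (mat 1 - ?R)) ** U"
    by (simp add: matrix_diff_ldistrib matrix_diff_rdistrib matrix_mul_assoc)
  also have "\<dots> = U" by (simp add: N_def matrix_inv_left R)
  finally show "N ** U - T ** (N ** U) = U - V" unfolding T by (simp add: algebra_simps)
qed

theorem theorem3p7:
  fixes K :: "(real^'n) set" and A U V F G :: "real^'n^'n" and s :: nat
  assumes "proper_cone K"
    and "K_monotone K A"
    and "K_regular_splitting K A U V"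
    and "K_weak_regular_splitting_II K U F G"
    and "V ** matrix_inv F ** G = G ** matrix_inv F ** V"
    and "s \<ge> 1"
    and "K_nonneg K (G - G ** matrix_inv F ** G)"
  shows "let Ps = matrix_inv (\<Sum>j<s. matpow (matrix_inv F ** G) j ** matrix_inv F);
             Ts = matpow (G ** matrix_inv F) s
                  + (\<Sum>j<s. matpow (G ** matrix_inv F) j ** V ** matrix_inv F)
         in K_regular_splitting K A Ps (Ts ** Ps)"
proof -
  have U: "K_monotone K U" and A: "A = U - V" and V: "K_nonneg K V"
    using assms(3) unfolding K_regular_splitting_def K_monotone_def by auto
  have F: "U = F - G" "invertible F" "K_nonneg K (matrix_inv F)" "K_nonneg K (G ** matrix_inv F)"
    using assms(4) unfolding K_weak_regular_splitting_II_def by auto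
  define Q where "Q = G ** matrix_inv F"
  define N where "N = matrix_inv (mat 1 - matpow Q s)"
  define S where "S = (\<Sum>j<s. matpow (matrix_inv F ** G) j ** matrix_inv F)"
  have N: "invertible (mat 1 - matpow Q s)" "K_nonneg K N"
    using weak_regular_II_mat_1_minus_matpow_inverse[OF assms(1) U assms(4,6)]
    by (simp_all add: Q_def N_def)
  have invU: "invertible U" using U unfolding K_monotone_def by blast
  have "invertible S" "matrix_inv S = N ** U"
    using iteration_sum_inverse[OF F(1) invU F(2) N(1)[unfolded Q_def]] by (simp_all add: S_def N_def Q_def)
  then have Ps: "matrix_inv S = N ** U" "invertible (N ** U)" "matrix_inv (N ** U) = S"
    by (metis invertible_matrix_inv matrix_inv_matrix_inv)+
  have "K_nonneg K S"
    unfolding S_def matpow_shift[symmetric]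
    by (intro K_nonneg_sum[OF proper_coneD(2)[OF assms(1)]] K_nonneg_mult[OF F(3)] K_nonneg_matpow F(4))
  moreover have "K_nonneg K (N ** (matpow Q s ** U) + V)"
    unfolding F(1) Q_def matpow_iteration_mult_splitting[OF F(2) assms(6)]
    by (intro K_nonneg_add K_nonneg_mult K_nonneg_matpow proper_coneD(2)[OF assms(1)] N(2) F(4) assms(7) V)
  ultimately show ?thesis
    using induced_iteration_matrix[OF F(1,2) N(1)[unfolded Q_def] assms(5)] Ps A
    unfolding Let_def K_regular_splitting_def S_def[symmetric] Q_def[symmetric] N_def[symmetric]
    by simp
qed

end
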